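(* Let $(\mathbb{P},\le,f)$ be a forcing property for $\mathcal{L}_A$ and $p\in\mathbb{P}$. Then (1) $F_p(\bigvee\Phi)=\sup_{\phi\in\Phi}F^w_p(\phi)$ for every sentence $\bigvee\Phi$ of $\mathcal{L}_A(C)$; (2) $F_p(\sup_x\phi(x))=\sup_{c\in C}F^w_p(\phi(c))$ for every sentence $\sup_x\phi(x)$ of $\mathcal{L}_A(C)$.
   Context: $\mathcal{L}$ is a countable continuous signature; formulas of $\mathcal{L}_{\omega_1,\omega}$ are built from atomic formulas using $\neg$, $\tfrac12$, $\dotplus$, countable conjunctions $\bigwedge$ and $\inf_x$; $\bigvee\Phi$ abbreviates $\neg\bigwedge_{\phi\in\Phi}\neg\phi$ and $\sup_x\phi$ abbreviates $\neg\inf_x\neg\phi$. $\mathcal{L}_A$ is a countable fragment, $C=\{c_i:i<\omega\}$ new constants, $\mathcal{L}_A(C)$ the smallest countable fragment of $\mathcal{L}_{\omega_1,\omega}(C)$ containing $\mathcal{L}_A$, $\mathcal{L}_A^{as}(C)$ its atomic sentences, $\mathcal{T}(C)$ closed terms. A forcing property $(\mathbb{P},\le,f)$: poset with $f_p\colon\mathcal{L}_A^{as}(C)\to[0,1]$ such that (1) $p\le q\Rightarrow f_p\le f_q$; (2) for every $p$, $\varepsilon>0$, $\tau,\sigma\in\mathcal{T}(C)$, atomic $\varphi(x)$ there are $q\le p$, $c\in C$ with $f_q(d(\tau,c))<\varepsilon$, $f_q(d(\tau,\sigma))<f_p(d(\sigma,\tau))+\varepsilon$, and if $f_p(d(\tau,\sigma))<\delta_{\varphi,x}(\varepsilon)$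 then $f_q(\varphi(\sigma))<f_p(\varphi(\tau))+\varepsilon$. $F_p$: $f_p$ on atomics; $F_p(\neg\varphi)=1-\inf_{q\le p}F_q(\varphi)$; $F_p(\tfrac12\varphi)=\tfrac12F_p(\varphi)$; $F_p(\varphi\dotplus\psi)=\min(F_p(\varphi)+F_p(\psi),1)$; $F_p(\bigwedge\Phi)=\inf_{\varphi\in\Phi}F_p(\varphi)$; $F_p(\inf_x\varphi)=\inf_{c\in C}F_p(\varphi(c))$. $F^w_p(\varphi)=\sup_{q\le p}\inf_{q'\le q}F_{q'}(\varphi)$. *)

theory Defs
  imports Complex_Main "HOL-Library.Countable_Set_Type"
begin

section \<open>Syntax of L_{omega1,omega}(C) for a continuous signature\<close>

text \<open>Function symbols (constants are 0-ary function symbols) have type 'f, relation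
symbols type 'r; arities are given by separate functions.  The new constants
c_i (i < omega) are the terms Cst i.\<close>

datatype 'f trm = Var nat | Fn 'f "'f trm list" | Cst nat

datatype ('f, 'r) fml =
    Rel 'r "'f trm list"
  | Dist "'f trm" "'f trm"
  | Neg "('f, 'r) fml"
  | Half "('f, 'r) fml"
  | Plus "('f, 'r) fml" "('f, 'r) fml"
  | Conj "('f, 'r) fml cset"
  | InfQ nat "('f, 'r) fml"

definition Disj :: "('f, 'r) fml cset \<Rightarrow> ('f, 'r) fml" where
  "Disj \<Phi> = Neg (Conj (cimage Neg \<Phi>))"

definition SupQ :: "nat \<Rightarrow> ('f, 'r) fml \<Rightarrow> ('f, 'r) fml" where
  "SupQ x \<phi> = Neg (InfQ x (Neg \<phi>))"

primrec tvars :: "'f trm \<Rightarrow> nat set" where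
  "tvars (Var x) = {x}"
| "tvars (Fn g ts) = \<Union> (set (map tvars ts))"
| "tvars (Cst i) = {}"

primrec tsubst :: "nat \<Rightarrow> 'f trm \<Rightarrow> 'f trm \<Rightarrow> 'f trm" where
  "tsubst x t (Var y) = (if y = x then t else Var y)"
| "tsubst x t (Fn g ts) = Fn g (map (tsubst x t) ts)"
| "tsubst x t (Cst i) = Cst i"

primrec fv :: "('f, 'r) fml \<Rightarrow> nat set" where
  "fv (Rel r ts) = \<Union> (set (map tvars ts))"
| "fv (Dist s t) = tvars s \<union> tvars t"
| "fv (Neg \<phi>) = fv \<phi>"
| "fv (Half \<phi>) = fv \<phi>"
| "fv (Plus \<phi> \<psi>) = fv \<phi> \<union> fv \<psi>"
| "fv (Conj \<Phi>) = \<Union> (rcset (cimage fv \<Phi>))"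
| "fv (InfQ x \<phi>) = fv \<phi> - {x}"

primrec subst :: "nat \<Rightarrow> 'f trm \<Rightarrow> ('f, 'r) fml \<Rightarrow> ('f, 'r) fml" where
  "subst x t (Rel r ts) = Rel r (map (tsubst x t) ts)"
| "subst x t (Dist s u) = Dist (tsubst x t s) (tsubst x t u)"
| "subst x t (Neg \<phi>) = Neg (subst x t \<phi>)"
| "subst x t (Half \<phi>) = Half (subst x t \<phi>)"
| "subst x t (Plus \<phi> \<psi>) = Plus (subst x t \<phi>) (subst x t \<psi>)"
| "subst x t (Conj \<Phi>) = Conj (cimage (subst x t) \<Phi>)"
| "subst x t (InfQ y \<phi>) = (if y = x then InfQ y \<phi> else InfQ y (subst x t \<phi>))"

primrec freefor :: "'f trm \<Rightarrow> nat \<Rightarrow> ('f, 'r) fml \<Rightarrow> bool" where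
  "freefor t x (Rel r ts) = True"
| "freefor t x (Dist s u) = True"
| "freefor t x (Neg \<phi>) = freefor t x \<phi>"
| "freefor t x (Half \<phi>) = freefor t x \<phi>"
| "freefor t x (Plus \<phi> \<psi>) = (freefor t x \<phi> \<and> freefor t x \<psi>)"
| "freefor t x (Conj \<Phi>) = (\<forall>b \<in> rcset (cimage (freefor t x) \<Phi>). b)"
| "freefor t x (InfQ y \<phi>) =
     (if y = x then True else ((x \<in> fv \<phi> \<longrightarrow> y \<notin> tvars t) \<and> freefor t x \<phi>))"

fun is_atomic :: "('f, 'r) fml \<Rightarrow> bool" where
  "is_atomic (Rel r ts) = True"
| "is_atomic (Dist s t) = True"
| "is_atomic _ = False"

fun immsub :: "('f, 'r) fml \<Rightarrow> ('f, 'r) fml set" where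
  "immsub (Neg \<phi>) = {\<phi>}"
| "immsub (Half \<phi>) = {\<phi>}"
| "immsub (Plus \<phi> \<psi>) = {\<phi>, \<psi>}"
| "immsub (Conj \<Phi>) = rcset \<Phi>"
| "immsub (InfQ x \<phi>) = {\<phi>}"
| "immsub _ = {}"

text \<open>Well-formedness w.r.t. the arities; D is the set of indices i for which
the new constant c_i may occur (D = {} gives L, D = UNIV gives L(C)).\<close>
primrec wf_trm :: "('f \<Rightarrow> nat) \<Rightarrow> nat set \<Rightarrow> 'f trm \<Rightarrow> bool" where
  "wf_trm arf D (Var x) = True"
| "wf_trm arf D (Fn g ts) = (length ts = arf g \<and> (\<forall>b \<in> set (map (wf_trm arf D) ts). b))"
| "wf_trm arf D (Cst i) = (i \<in> D)"

primrec wf_fml :: "('f \<Rightarrow> nat) \<Rightarrow> ('r \<Rightarrow> nat) \<Rightarrow> nat set \<Rightarrow> ('f, 'r) fml \<Rightarrow> bool" where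
  "wf_fml arf arr D (Rel r ts) = (length ts = arr r \<and> (\<forall>t \<in> set ts. wf_trm arf D t))"
| "wf_fml arf arr D (Dist s t) = (wf_trm arf D s \<and> wf_trm arf D t)"
| "wf_fml arf arr D (Neg \<phi>) = wf_fml arf arr D \<phi>"
| "wf_fml arf arr D (Half \<phi>) = wf_fml arf arr D \<phi>"
| "wf_fml arf arr D (Plus \<phi> \<psi>) = (wf_fml arf arr D \<phi> \<and> wf_fml arf arr D \<psi>)"
| "wf_fml arf arr D (Conj \<Phi>) = (\<forall>b \<in> rcset (cimage (wf_fml arf arr D) \<Phi>). b)"
| "wf_fml arf arr D (InfQ x \<phi>) = wf_fml arf arr D \<phi>"

definition fragment :: "('f \<Rightarrow> nat) \<Rightarrow> ('r \<Rightarrow> nat) \<Rightarrow> nat set \<Rightarrow> ('f, 'r) fml set \<Rightarrow> bool" where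
  "fragment arf arr D S \<longleftrightarrow>
     S \<subseteq> {\<phi>. wf_fml arf arr D \<phi>} \<and>
     (\<forall>\<phi>. is_atomic \<phi> \<and> wf_fml arf arr D \<phi> \<longrightarrow> \<phi> \<in> S) \<and>
     (\<forall>\<phi>\<in>S. immsub \<phi> \<subseteq> S) \<and>
     (\<forall>\<phi>\<in>S. Neg \<phi> \<in> S \<and> Half \<phi> \<in> S \<and> (\<forall>x. InfQ x \<phi> \<in> S)) \<and>
     (\<forall>\<phi>\<in>S. \<forall>\<psi>\<in>S. Plus \<phi> \<psi> \<in> S) \<and>
     (\<forall>\<Phi>. finite (rcset \<Phi>) \<and> rcset \<Phi> \<subseteq> S \<longrightarrow> Conj \<Phi> \<in> S) \<and>
     (\<forall>\<phi>\<in>S. \<forall>x t. wf_trm arf D t \<and> freefor t x \<phi> \<longrightarrow> subst x t \<phi> \<in> S)"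

definition LAC :: "('f \<Rightarrow> nat) \<Rightarrow> ('r \<Rightarrow> nat) \<Rightarrow> ('f, 'r) fml set \<Rightarrow> ('f, 'r) fml set" where
  "LAC arf arr LA = \<Inter> {S. fragment arf arr UNIV S \<and> countable S \<and> LA \<subseteq> S}"

definition sentence :: "('f, 'r) fml \<Rightarrow> bool" where
  "sentence \<phi> \<longleftrightarrow> fv \<phi> = {}"

definition atomic_sentences :: "('f \<Rightarrow> nat) \<Rightarrow> ('r \<Rightarrow> nat) \<Rightarrow> ('f, 'r) fml set \<Rightarrow> ('f, 'r) fml set" where
  "atomic_sentences arf arr LA = {\<phi> \<in> LAC arf arr LA. is_atomic \<phi> \<and> sentence \<phi>}"

definition closed_terms :: "('f \<Rightarrow> nat) \<Rightarrow> 'f trm set" where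
  "closed_terms arf = {t. wf_trm arf UNIV t \<and> tvars t = {}}"

text \<open>delta phi x eps is the modulus of uniform continuity delta_{phi,x}(eps) of the
atomic formula phi in the variable x (given with the signature).\<close>
definition forcing_property ::
  "('f \<Rightarrow> nat) \<Rightarrow> ('r \<Rightarrow> nat) \<Rightarrow> ('f, 'r) fml set \<Rightarrow> (('f, 'r) fml \<Rightarrow> nat \<Rightarrow> real \<Rightarrow> real)
   \<Rightarrow> 'p set \<Rightarrow> ('p \<Rightarrow> 'p \<Rightarrow> bool) \<Rightarrow> ('p \<Rightarrow> ('f, 'r) fml \<Rightarrow> real) \<Rightarrow> bool" where
  "forcing_property arf arr LA \<delta> P le f \<longleftrightarrow>
     (\<forall>p\<in>P. le p p) \<and>
     (\<forall>p\<in>P. \<forall>q\<in>P. le p q \<and> le q p \<longrightarrow> p = q) \<and>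
     (\<forall>p\<in>P. \<forall>q\<in>P. \<forall>r\<in>P. le p q \<and> le q r \<longrightarrow> le p r) \<and>
     (\<forall>p\<in>P. \<forall>\<phi>\<in>atomic_sentences arf arr LA. 0 \<le> f p \<phi> \<and> f p \<phi> \<le> 1) \<and>
     (\<forall>p\<in>P. \<forall>q\<in>P. le p q \<longrightarrow> (\<forall>\<phi>\<in>atomic_sentences arf arr LA. f p \<phi> \<le> f q \<phi>)) \<and>
     (\<forall>p\<in>P. \<forall>\<epsilon>>0. \<forall>\<tau>\<in>closed_terms arf. \<forall>\<sigma>\<in>closed_terms arf. \<forall>\<phi> x.
        is_atomic \<phi> \<and> \<phi> \<in> LAC arf arr LA \<and> fv \<phi> \<subseteq> {x} \<longrightarrow>
        (\<exists>q\<in>P. \<exists>c. le q p \<and>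
            f q (Dist \<tau> (Cst c)) < \<epsilon> \<and>
            f q (Dist \<tau> \<sigma>) < f p (Dist \<sigma> \<tau>) + \<epsilon> \<and>
            (f p (Dist \<tau> \<sigma>) < \<delta> \<phi> x \<epsilon> \<longrightarrow>
               f q (subst x \<sigma> \<phi>) < f p (subst x \<tau> \<phi>) + \<epsilon>)))"

text \<open>Infima / suprema of subsets of [0,1], taken in [0,1].\<close>
definition inf01 :: "real set \<Rightarrow> real" where
  "inf01 S = (if S = {} then 1 else Inf S)"

definition sup01 :: "real set \<Rightarrow> real" where
  "sup01 S = (if S = {} then 0 else Sup S)"

text \<open>Skeleton of a formula (all terms and bound variable names erased), used only to
justify termination of the recursion defining F.\<close>
primrec skel :: "('f, 'r) fml \<Rightarrow> ('f, 'r) fml" where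
  "skel (Rel r ts) = Rel r []"
| "skel (Dist s t) = Dist (Var 0) (Var 0)"
| "skel (Neg \<phi>) = Neg (skel \<phi>)"
| "skel (Half \<phi>) = Half (skel \<phi>)"
| "skel (Plus \<phi> \<psi>) = Plus (skel \<phi>) (skel \<psi>)"
| "skel (Conj \<Phi>) = Conj (cimage skel \<Phi>)"
| "skel (InfQ x \<phi>) = InfQ 0 (skel \<phi>)"

lemma skel_subst[simp]: "skel (subst x t \<phi>) = skel \<phi>"
  by (induction \<phi>) (auto simp: cset.map_comp intro!: cset.map_cong0)

lemma wf_immsub: "wf {(a, b). a \<in> immsub b}"
proof (rule wfUNIVI)
  fix P :: "('f, 'r) fml \<Rightarrow> bool" and x
  assume H: "\<forall>x. (\<forall>y. (y, x) \<in> {(a, b). a \<in> immsub b} \<longrightarrow> P y) \<longrightarrow> P x"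
  show "P x"
  proof (induction x)
    case (Conj X) then show ?case using H[rule_format, of "Conj X"] by auto
  qed (use H in \<open>auto\<close>)
qed
function F :: "'p set \<Rightarrow> ('p \<Rightarrow> 'p \<Rightarrow> bool) \<Rightarrow> ('p \<Rightarrow> ('f, 'r) fml \<Rightarrow> real)
                 \<Rightarrow> ('f, 'r) fml \<Rightarrow> 'p \<Rightarrow> real" where
  "F P le f (Rel r ts) p = f p (Rel r ts)"
| "F P le f (Dist s t) p = f p (Dist s t)"
| "F P le f (Neg \<phi>) p = 1 - inf01 ((\<lambda>q. F P le f \<phi> q) ` {q \<in> P. le q p})"
| "F P le f (Half \<phi>) p = F P le f \<phi> p / 2"
| "F P le f (Plus \<phi> \<psi>) p = min (F P le f \<phi> p + F P le f \<psi> p) 1"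
| "F P le f (Conj \<Phi>) p = inf01 ((\<lambda>\<phi>. F P le f \<phi> p) ` rcset \<Phi>)"
| "F P le f (InfQ x \<phi>) p = inf01 ((\<lambda>c. F P le f (subst x (Cst c) \<phi>) p) ` UNIV)"
  by pat_completeness auto
termination
  by (relation "inv_image {(a, b). a \<in> immsub b} (\<lambda>(P, le, f, \<phi>, p). skel \<phi>)")
     (simp_all add: wf_immsub cset.set_map)

definition Fw :: "'p set \<Rightarrow> ('p \<Rightarrow> 'p \<Rightarrow> bool) \<Rightarrow> ('p \<Rightarrow> ('f, 'r) fml \<Rightarrow> real)
                  \<Rightarrow> ('f, 'r) fml \<Rightarrow> 'p \<Rightarrow> real" where
  "Fw P le f \<phi> p = sup01 ((\<lambda>q. inf01 ((\<lambda>q'. F P le f \<phi> q') ` {q' \<in> P. le q' q})) ` {q \<in> P. le q p})"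

end

theory Submission
  imports Defs
begin

text \<open>Negation turns the outer infimum over extensions into a supremum, the conjunction
of negated formulas turns the inner infimum into a supremum as well, and the two suprema
commute; what remains is exactly the supremum of the weak forcing values.  The only
property of forcing used is that all forcing values of sentences of L_A(C) lie in [0,1],
which holds because the atomic values do and the clauses defining F preserve [0,1].\<close>

lemma inf01_in_unit:
  assumes "S \<subseteq> {0..1}"
  shows "inf01 S \<in> {0..1}"
proof (cases "S = {}")
  case False
  then obtain x where x: "x \<in> S" by blast
  have "bdd_below S" by (rule bdd_below_mono[OF bdd_below_Icc assms])
  then have "Inf S \<le> x" using x by (intro cInf_lower)
  moreover have "0 \<le> Inf S" using False assms by (intro cInf_greatest) auto
  ultimately show ?thesis using x assms False by (auto simp: inf01_def)
qed (simp add: inf01_def)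

lemma sup01_in_unit:
  assumes "S \<subseteq> {0..1}"
  shows "sup01 S \<in> {0..1}"
proof (cases "S = {}")
  case False
  then obtain x where x: "x \<in> S" by blast
  have "bdd_above S" by (rule bdd_above_mono[OF bdd_above_Icc assms])
  then have "x \<le> Sup S" using x by (intro cSup_upper)
  moreover have "Sup S \<le> 1" using False assms by (intro cSup_least) auto
  ultimately show ?thesis using x assms False by (auto simp: sup01_def)
qed (simp add: sup01_def)

lemma inf01_one_minus:
  fixes h :: "'a \<Rightarrow> real"
  assumes h: "\<forall>x\<in>S. h x \<le> 1"
  shows "inf01 ((\<lambda>x. 1 - h x) ` S) = 1 - sup01 (h ` S)"
proof (cases "S = {}")
  case False
  have above: "bdd_above (h ` S)" using h by (auto intro: bdd_aboveI[of _ 1])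
  have below: "bdd_below ((\<lambda>x. 1 - h x) ` S)" using h by (auto intro: bdd_belowI[of _ 0])
  have "1 - Sup (h ` S) \<le> Inf ((\<lambda>x. 1 - h x) ` S)"
    using False above by (auto intro!: cInf_greatest cSup_upper)
  moreover have "Sup (h ` S) \<le> 1 - Inf ((\<lambda>x. 1 - h x) ` S)"
  proof (rule cSup_least)
    fix y assume "y \<in> h ` S"
    then obtain x where "x \<in> S" "y = h x" by blast
    then have "Inf ((\<lambda>x. 1 - h x) ` S) \<le> 1 - y" using below by (auto intro: cInf_lower)
    then show "y \<le> 1 - Inf ((\<lambda>x. 1 - h x) ` S)" by simp
  qed (use False in simp)
  ultimately show ?thesis using False by (simp add: inf01_def sup01_def)
qed (simp add: inf01_def sup01_def)

lemma sup01_upper: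
  assumes "S \<subseteq> {0..1}" and "x \<in> S"
  shows "x \<le> sup01 S"
  using assms bdd_above_mono[OF bdd_above_Icc assms(1)] by (auto simp: sup01_def intro: cSup_upper)

lemma sup01_least:
  assumes "\<And>x. x \<in> S \<Longrightarrow> x \<le> b" and "0 \<le> b"
  shows "sup01 S \<le> b"
  using assms by (auto simp: sup01_def intro: cSup_least)

lemma sup01_swap_le:
  fixes h :: "'i \<Rightarrow> 'q \<Rightarrow> real"
  assumes h: "\<And>i q. i \<in> I \<Longrightarrow> q \<in> Q \<Longrightarrow> h i q \<in> {0..1}"
  shows "sup01 ((\<lambda>i. sup01 (h i ` Q)) ` I) \<le> sup01 ((\<lambda>q. sup01 ((\<lambda>i. h i q) ` I)) ` Q)"
    (is "_ \<le> ?R")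
proof -
  have inner: "sup01 ((\<lambda>i. h i q) ` I) \<in> {0..1}" if "q \<in> Q" for q
    using h that by (intro sup01_in_unit) auto
  have R: "?R \<in> {0..1}"
    using inner by (intro sup01_in_unit) auto
  have "h i q \<le> ?R" if "i \<in> I" "q \<in> Q" for i q
  proof -
    have "h i q \<le> sup01 ((\<lambda>i. h i q) ` I)"
      using h that by (intro sup01_upper) auto
    also have "\<dots> \<le> ?R"
      using inner that by (intro sup01_upper) auto
    finally show ?thesis .
  qed
  then show ?thesis
    using R by (auto intro!: sup01_least)
qed

lemma sup01_swap:
  fixes h :: "'i \<Rightarrow> 'q \<Rightarrow> real"
  assumes "\<And>i q. i \<in> I \<Longrightarrow> q \<in> Q \<Longrightarrow> h i q \<in> {0..1}"
  shows "sup01 ((\<lambda>i. sup01 (h i ` Q)) ` I) = sup01 ((\<lambda>q. sup01 ((\<lambda>i. h i q) ` I)) ` Q)"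
  using sup01_swap_le[of I Q h] sup01_swap_le[of Q I "\<lambda>q i. h i q"] assms
  by (intro antisym) auto

lemma one_minus_inf01_inf01_one_minus:
  fixes h :: "'i \<Rightarrow> 'q \<Rightarrow> real"
  assumes h: "\<And>i q. i \<in> I \<Longrightarrow> q \<in> Q \<Longrightarrow> h i q \<in> {0..1}"
  shows "1 - inf01 ((\<lambda>q. inf01 ((\<lambda>i. 1 - h i q) ` I)) ` Q) = sup01 ((\<lambda>i. sup01 (h i ` Q)) ` I)"
proof -
  have inner: "sup01 ((\<lambda>i. h i q) ` I) \<in> {0..1}" if "q \<in> Q" for q
    using h that by (intro sup01_in_unit) auto
  have "inf01 ((\<lambda>q. inf01 ((\<lambda>i. 1 - h i q) ` I)) ` Q)
        = inf01 ((\<lambda>q. 1 - sup01 ((\<lambda>i. h i q) ` I)) ` Q)"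
    using h by (intro arg_cong[where f = inf01] image_cong refl inf01_one_minus) auto
  also have "\<dots> = 1 - sup01 ((\<lambda>q. sup01 ((\<lambda>i. h i q) ` I)) ` Q)"
    using inner by (intro inf01_one_minus) auto
  finally show ?thesis
    using sup01_swap[OF h] by simp
qed

lemma tvars_tsubst_Cst [simp]: "tvars (tsubst x (Cst c) t) = tvars t - {x}"
  by (induction t) auto

lemma fv_subst_Cst [simp]: "fv (subst x (Cst c) \<phi>) = fv \<phi> - {x}"
  by (induction \<phi>) (auto simp: cset.set_map)

lemma freefor_Cst: "freefor (Cst c) x \<phi>"
  by (induction \<phi>) (auto simp: cset.set_map)

lemma LAC_immsub:
  assumes "\<psi> \<in> LAC arf arr LA" and "\<chi> \<in> immsub \<psi>"
  shows "\<chi> \<in> LAC arf arr LA"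
  unfolding LAC_def
proof (rule InterI)
  fix S assume S: "S \<in> {S. fragment arf arr UNIV S \<and> countable S \<and> LA \<subseteq> S}"
  then have "\<psi> \<in> S" using assms(1) unfolding LAC_def by blast
  with S assms(2) show "\<chi> \<in> S" unfolding fragment_def by blast
qed

lemma LAC_subst_Cst:
  assumes "\<psi> \<in> LAC arf arr LA"
  shows "subst x (Cst c) \<psi> \<in> LAC arf arr LA"
  unfolding LAC_def
proof (rule InterI)
  fix S assume S: "S \<in> {S. fragment arf arr UNIV S \<and> countable S \<and> LA \<subseteq> S}"
  then have "\<psi> \<in> S" using assms unfolding LAC_def by blast
  with S show "subst x (Cst c) \<psi> \<in> S"
    using freefor_Cst[of c x \<psi>] unfolding fragment_def by simp
qed

lemma LAC_Disj_member:
  assumes "Disj \<Phi> \<in> LAC arf arr LA" and "\<phi> \<in> rcset \<Phi>"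
  shows "\<phi> \<in> LAC arf arr LA"
proof -
  have "Conj (cimage Neg \<Phi>) \<in> LAC arf arr LA"
    using assms(1) unfolding Disj_def by (rule LAC_immsub) simp
  then have "Neg \<phi> \<in> LAC arf arr LA" by (rule LAC_immsub) (simp add: cset.set_map assms(2))
  then show ?thesis by (rule LAC_immsub) simp
qed

lemma sentence_Disj_member: "sentence (Disj \<Phi>) \<Longrightarrow> \<phi> \<in> rcset \<Phi> \<Longrightarrow> sentence \<phi>"
  by (auto simp: sentence_def Disj_def cset.set_map)

lemma sentence_SupQ_instance: "sentence (SupQ x \<phi>) \<Longrightarrow> sentence (subst x (Cst c) \<phi>)"
  by (simp add: sentence_def SupQ_def)

lemma LAC_SupQ_instance:
  assumes "SupQ x \<phi> \<in> LAC arf arr LA"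
  shows "subst x (Cst c) \<phi> \<in> LAC arf arr LA"
proof -
  have "InfQ x (Neg \<phi>) \<in> LAC arf arr LA"
    using assms unfolding SupQ_def by (rule LAC_immsub) simp
  then have "Neg \<phi> \<in> LAC arf arr LA" by (rule LAC_immsub) simp
  then have "\<phi> \<in> LAC arf arr LA" by (rule LAC_immsub) simp
  then show ?thesis by (rule LAC_subst_Cst)
qed

lemma F_in_unit:
  "\<lbrakk>\<forall>q\<in>P. \<forall>\<phi>\<in>atomic_sentences arf arr LA. f q \<phi> \<in> {0..1};
    \<psi> \<in> LAC arf arr LA; sentence \<psi>; q \<in> P\<rbrakk> \<Longrightarrow> F P le f \<psi> q \<in> {0..1}"
proof (induction P le f \<psi> q rule: F.induct)
  case (1 P le f r ts p)
  then show ?case by (simp add: atomic_sentences_def)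
next
  case (2 P le f s t p)
  then show ?case by (simp add: atomic_sentences_def)
next
  case (3 P le f \<phi> p)
  have "\<phi> \<in> LAC arf arr LA" using 3(3) by (rule LAC_immsub) simp
  with 3 have "inf01 (F P le f \<phi> ` {q \<in> P. le q p}) \<in> {0..1}"
    by (intro inf01_in_unit) (auto simp: sentence_def)
  then show ?case by simp
next
  case (4 P le f \<phi> p)
  have "\<phi> \<in> LAC arf arr LA" using 4(3) by (rule LAC_immsub) simp
  with 4 show ?case by (simp add: sentence_def)
next
  case (5 P le f \<phi> \<psi> p)
  have "\<phi> \<in> LAC arf arr LA" "\<psi> \<in> LAC arf arr LA" using 5(4) by (auto intro: LAC_immsub)
  with 5 show ?case by (simp add: sentence_def)
next
  case (6 P le f \<Phi> p)
  have "\<phi> \<in> LAC arf arr LA" if "\<phi> \<in> rcset \<Phi>" for \<phi> using 6(3) that by (auto intro: LAC_immsub)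
  moreover have "sentence \<phi>" if "\<phi> \<in> rcset \<Phi>" for \<phi>
    using 6(4) that by (auto simp: sentence_def cset.set_map)
  ultimately show ?case unfolding F.simps using 6 by (intro inf01_in_unit) auto
next
  case (7 P le f x \<phi> p)
  have "\<phi> \<in> LAC arf arr LA" using 7(3) by (rule LAC_immsub) simp
  then have "subst x (Cst c) \<phi> \<in> LAC arf arr LA" for c by (rule LAC_subst_Cst)
  moreover have "sentence (subst x (Cst c) \<phi>)" for c using 7(4) by (simp add: sentence_def)
  ultimately show ?case unfolding F.simps using 7 by (intro inf01_in_unit) auto
qed

lemma F_Disj_eq_sup01_Fw:
  assumes unit: "\<And>\<phi> q. \<phi> \<in> rcset \<Phi> \<Longrightarrow> q \<in> P \<Longrightarrow> F P le f \<phi> q \<in> {0..1}"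
  shows "F P le f (Disj \<Phi>) p = sup01 ((\<lambda>\<phi>. Fw P le f \<phi> p) ` rcset \<Phi>)"
proof -
  define g where "g \<phi> q = 1 - F P le f (Neg \<phi>) q" for \<phi> q
  have "g \<phi> q \<in> {0..1}" if "\<phi> \<in> rcset \<Phi>" for \<phi> q
  proof -
    have "F P le f \<phi> ` {q' \<in> P. le q' q} \<subseteq> {0..1}" using unit that by auto
    from inf01_in_unit[OF this] show ?thesis by (simp add: g_def)
  qed
  then have "1 - inf01 ((\<lambda>q. inf01 ((\<lambda>\<phi>. 1 - g \<phi> q) ` rcset \<Phi>)) ` {q \<in> P. le q p})
             = sup01 ((\<lambda>\<phi>. sup01 (g \<phi> ` {q \<in> P. le q p})) ` rcset \<Phi>)"
    by (intro one_minus_inf01_inf01_one_minus)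
  then show ?thesis
    by (simp add: Disj_def g_def Fw_def cset.set_map image_image)
qed

lemma F_SupQ_eq_sup01_Fw:
  assumes unit: "\<And>c q. q \<in> P \<Longrightarrow> F P le f (subst x (Cst c) \<phi>) q \<in> {0..1}"
  shows "F P le f (SupQ x \<phi>) p = sup01 ((\<lambda>c. Fw P le f (subst x (Cst c) \<phi>) p) ` UNIV)"
proof -
  define g where "g c q = 1 - F P le f (Neg (subst x (Cst c) \<phi>)) q" for c q
  have "g c q \<in> {0..1}" for c q
  proof -
    have "F P le f (subst x (Cst c) \<phi>) ` {q' \<in> P. le q' q} \<subseteq> {0..1}" using unit by auto
    from inf01_in_unit[OF this] show ?thesis by (simp add: g_def)
  qed
  then have "1 - inf01 ((\<lambda>q. inf01 ((\<lambda>c. 1 - g c q) ` UNIV)) ` {q \<in> P. le q p})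
             = sup01 ((\<lambda>c. sup01 (g c ` {q \<in> P. le q p})) ` UNIV)"
    by (intro one_minus_inf01_inf01_one_minus)
  then show ?thesis
    by (simp add: SupQ_def g_def Fw_def)
qed

theorem proposition4p1:
  fixes arf :: "'f \<Rightarrow> nat" and arr :: "'r \<Rightarrow> nat"
    and LA :: "('f, 'r) fml set"
    and \<delta> :: "('f, 'r) fml \<Rightarrow> nat \<Rightarrow> real \<Rightarrow> real"
    and P :: "'p set" and le :: "'p \<Rightarrow> 'p \<Rightarrow> bool" and f :: "'p \<Rightarrow> ('f, 'r) fml \<Rightarrow> real"
    and p :: 'p
  assumes sig_countable: "countable (UNIV :: 'f set)" "countable (UNIV :: 'r set)"
    and LA_fragment: "fragment arf arr {} LA" "countable LA"
    and delta_pos: "\<forall>\<phi> x \<epsilon>. \<epsilon> > 0 \<longrightarrow> \<delta> \<phi> x \<epsilon> > 0"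
    and forcing: "forcing_property arf arr LA \<delta> P le f"
    and p: "p \<in> P"
  shows "(\<forall>\<Phi>. Disj \<Phi> \<in> LAC arf arr LA \<and> sentence (Disj \<Phi>) \<longrightarrow>
            F P le f (Disj \<Phi>) p = sup01 ((\<lambda>\<phi>. Fw P le f \<phi> p) ` rcset \<Phi>))
       \<and> (\<forall>x \<phi>. SupQ x \<phi> \<in> LAC arf arr LA \<and> sentence (SupQ x \<phi>) \<longrightarrow>
            F P le f (SupQ x \<phi>) p = sup01 ((\<lambda>c. Fw P le f (subst x (Cst c) \<phi>) p) ` UNIV))"
proof -
  have atomic: "\<forall>q\<in>P. \<forall>\<phi>\<in>atomic_sentences arf arr LA. f q \<phi> \<in> {0..1}"
    using forcing unfolding forcing_property_def by auto
  have unit: "F P le f \<psi> q \<in> {0..1}"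
    if "\<psi> \<in> LAC arf arr LA" "sentence \<psi>" "q \<in> P" for \<psi> q
    using F_in_unit[OF atomic that] .
  show ?thesis
  proof (intro conjI allI impI; elim conjE)
    fix \<Phi> assume "Disj \<Phi> \<in> LAC arf arr LA" "sentence (Disj \<Phi>)"
    then show "F P le f (Disj \<Phi>) p = sup01 ((\<lambda>\<phi>. Fw P le f \<phi> p) ` rcset \<Phi>)"
      by (metis F_Disj_eq_sup01_Fw unit LAC_Disj_member sentence_Disj_member)
  next
    fix x \<phi> assume "SupQ x \<phi> \<in> LAC arf arr LA" "sentence (SupQ x \<phi>)"
    then show "F P le f (SupQ x \<phi>) p = sup01 ((\<lambda>c. Fw P le f (subst x (Cst c) \<phi>) p) ` UNIV)"
      by (metis F_SupQ_eq_sup01_Fw unit LAC_SupQ_instance sentence_SupQ_instance)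
  qed
qed

end
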